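(* Let $\mathcal{G}\subset\mathcal{S}$ with harmonic analogue $\mathcal{G}_H^0$. Then $\mathcal{G}$ is closed under convex combinations if and only if $\mathcal{G}_H^0$ is closed under convex combinations; here a class is closed under convex combinations if for any members $f_1,f_2,\dots$ of it and any $t_n\in[0,1]$ with $\sum_{n\ge1}t_n=1$, the function $\sum_{n\ge1}t_nf_n$ belongs to the class.
   Context: $\mathbb{D}$ is the open unit disk. $\mathcal{S}$ is the class of analytic univalent functions $f$ in $\mathbb{D}$ with $f(0)=0$, $f'(0)=1$. For $\mathcal{G}\subset\mathcal{S}$, its harmonic analogue $\mathcal{G}_H^0$ is the class of harmonic functions $f=h+\bar g$ ($h,g$ analytic in $\mathbb{D}$) such that $h+\epsilon g\in\mathcal{G}$ for every $\epsilon\in\mathbb{C}$ with $|\epsilon|=1$. *)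

theory Defs
  imports "HOL-Analysis.Analysis"
begin

text \<open>Functions are total maps complex => complex; only their values on the unit
disk ball 0 1 matter. A class is a set of such functions.\<close>

definition unit_disk :: "complex set" where
  "unit_disk = ball 0 1"

definition class_S :: "(complex \<Rightarrow> complex) set" where
  "class_S = {f. f analytic_on unit_disk \<and> inj_on f unit_disk \<and> f 0 = 0 \<and> deriv f 0 = 1}"

definition in_class :: "(complex \<Rightarrow> complex) \<Rightarrow> (complex \<Rightarrow> complex) set \<Rightarrow> bool" where
  "in_class f C \<longleftrightarrow> (\<exists>F\<in>C. \<forall>z\<in>unit_disk. F z = f z)"

definition harmonic_analogue :: "(complex \<Rightarrow> complex) set \<Rightarrow> (complex \<Rightarrow> complex) set" where
  "harmonic_analogue G = {f. \<exists>h g. h analytic_on unit_disk \<and> g analytic_on unit_disk \<and>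
      (\<forall>z\<in>unit_disk. f z = h z + cnj (g z)) \<and>
      (\<forall>\<epsilon>::complex. norm \<epsilon> = 1 \<longrightarrow> in_class (\<lambda>z. h z + \<epsilon> * g z) G)}"

definition closed_convex_comb :: "(complex \<Rightarrow> complex) set \<Rightarrow> bool" where
  "closed_convex_comb C \<longleftrightarrow>
     (\<forall>(f :: nat \<Rightarrow> complex \<Rightarrow> complex) (t :: nat \<Rightarrow> real).
        (\<forall>n. f n \<in> C) \<longrightarrow> (\<forall>n. 0 \<le> t n \<and> t n \<le> 1) \<longrightarrow> t sums 1 \<longrightarrow>
        (\<exists>F\<in>C. \<forall>z\<in>unit_disk. (\<lambda>n. complex_of_real (t n) * f n z) sums F z))"

end

theory Submission
  imports Defs "HOL-Complex_Analysis.Complex_Analysis"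
begin

text \<open>If \<open>G\<close> is closed under convex combinations and \<open>f\<^sub>n = h\<^sub>n + cnj g\<^sub>n\<close> lie in
\<open>G\<^sub>H\<^sup>0\<close>, then for every unimodular \<open>\<epsilon>\<close> the series \<open>\<Sum> t\<^sub>n (h\<^sub>n + \<epsilon> g\<^sub>n)\<close> converges to a
member \<open>C\<^sub>\<epsilon>\<close> of \<open>G\<close>; the sums \<open>H = \<Sum> t\<^sub>n h\<^sub>n\<close> and \<open>K = \<Sum> t\<^sub>n g\<^sub>n\<close> are
\<open>(C\<^sub>1 \<plusminus> C\<^sub>-\<^sub>1)/2\<close>, hence analytic, and \<open>H + \<epsilon> K = C\<^sub>\<epsilon>\<close>, so \<open>H + cnj K\<close> lies in \<open>G\<^sub>H\<^sup>0\<close>.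

Conversely, members of \<open>G\<close> lie in \<open>G\<^sub>H\<^sup>0\<close> with co-analytic part \<open>0\<close>, so a convex
combination of them is some \<open>h + cnj g\<close> in \<open>G\<^sub>H\<^sup>0\<close>. It is also a pointwise limit of
analytic partial sums; by the Baire category theorem these are uniformly bounded on some
small disk, where Montel's theorem makes the limit analytic. There both \<open>g\<close> and \<open>cnj g\<close> are
analytic, so \<open>g\<close> is constant, on the whole unit disk by analytic continuation, and
\<open>g 0 = 0\<close> because \<open>h \<plusminus> g\<close> belong to \<open>S\<close>. Thus the combination equals \<open>h + g\<close>, a member of \<open>G\<close>.\<close>

lemma constant_on_if_holomorphic_cnj:
  assumes "g holomorphic_on S" "(\<lambda>z. cnj (g z)) holomorphic_on S" "open S" "convex S"
  shows "g constant_on S"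
proof -
  have "(g has_field_derivative 0) (at z within S)" if "z \<in> S" for z
  proof -
    obtain a where a: "(g has_field_derivative a) (at z)"
      using assms(1,3) \<open>z \<in> S\<close> holomorphic_on_imp_differentiable_at field_differentiable_def
      by blast
    obtain b where b: "((\<lambda>z. cnj (g z)) has_field_derivative b) (at z)"
      using assms(2,3) \<open>z \<in> S\<close> holomorphic_on_imp_differentiable_at field_differentiable_def
      by blast
    have "((\<lambda>z. cnj (g z)) has_derivative (\<lambda>h. cnj (a * h))) (at z)"
      using bounded_linear.has_derivative[OF bounded_linear_cnj a[unfolded has_field_derivative_def]]
      by simp
    then have "(\<lambda>h. cnj (a * h)) = (*) b"
      using has_derivative_unique b[unfolded has_field_derivative_def] by blast
    \<comment> \<open>the real-linear map \<open>h \<mapsto> cnj (a h)\<close> is complex-linear only for \<open>a = 0\<close>\<close>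
    then have "cnj a = b" "cnj (a * \<i>) = b * \<i>"
      by (metis mult_1_right)+
    then have "a = 0"
      by (simp add: complex_eq_iff)
    with a show ?thesis
      using has_field_derivative_at_within by blast
  qed
  then show ?thesis
    unfolding constant_on_def by (rule has_field_derivative_zero_constant[OF assms(4)])
qed

lemma pointwise_bounded_imp_bounded_on_ball:
  fixes P :: "nat \<Rightarrow> 'a::complete_space \<Rightarrow> 'b::real_normed_vector"
  assumes "open S" "S \<noteq> {}"
    and cont: "\<And>N. continuous_on S (P N)"
    and bnd: "\<And>z. z \<in> S \<Longrightarrow> \<exists>K. \<forall>N. norm (P N z) \<le> K"
  obtains x r M where "r > 0" "ball x r \<subseteq> S" "\<And>N z. z \<in> ball x r \<Longrightarrow> norm (P N z) \<le> M"
proof -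
  define E where "E M = (\<Inter>N. S \<inter> (\<lambda>z. norm (P N z)) -` {..real M})" for M :: nat
  let ?X = "top_of_set S"
  have E_iff: "z \<in> E M \<longleftrightarrow> z \<in> S \<and> (\<forall>N. norm (P N z) \<le> real M)" for z M
    by (auto simp: E_def)
  have closed: "closedin ?X (E M)" for M
  proof -
    have "closedin ?X (S \<inter> (\<lambda>z. norm (P N z)) -` {..real M})" for N
      by (intro continuous_closedin_preimage continuous_intros cont)
    then show ?thesis
      unfolding E_def by (intro closedin_Inter) auto
  qed
  have cover: "\<Union> (range E) = S"
  proof
    show "S \<subseteq> \<Union> (range E)"
    proof
      fix z assume "z \<in> S"
      then obtain K where "\<And>N. norm (P N z) \<le> K"
        using bnd by blast
      then have "\<And>N. norm (P N z) \<le> real (nat \<lceil>K\<rceil>)"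
        by (meson order.trans real_nat_ceiling_ge)
      with \<open>z \<in> S\<close> have "z \<in> E (nat \<lceil>K\<rceil>)"
        by (simp add: E_iff)
      then show "z \<in> \<Union> (range E)"
        by blast
    qed
  qed (use E_iff in blast)
  have "\<exists>M. ?X interior_of E M \<noteq> {}"
  proof (rule ccontr)
    have "completely_metrizable_space ?X"
      using completely_metrizable_space_openin[OF completely_metrizable_space_euclidean] \<open>open S\<close>
      by simp
    moreover assume "\<nexists>M. ?X interior_of E M \<noteq> {}"
    ultimately have "?X interior_of \<Union> (range E) = {}"
      using Baire_category_alt[of ?X "range E"] closed by auto
    moreover have "?X interior_of S = S"
      using interior_of_topspace[of ?X] by simp
    ultimately show False
      using cover \<open>S \<noteq> {}\<close> by simp
  qed
  then obtain M x where x: "x \<in> ?X interior_of E M"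
    by blast
  moreover have "open (?X interior_of E M)"
    using openin_open_trans[OF openin_interior_of \<open>open S\<close>] .
  ultimately obtain r where r: "r > 0" "ball x r \<subseteq> ?X interior_of E M"
    using open_contains_ball by blast
  have "ball x r \<subseteq> E M"
    using r(2) interior_of_subset[of ?X "E M"] by (rule order.trans)
  then have "ball x r \<subseteq> S" and "\<And>N z. z \<in> ball x r \<Longrightarrow> norm (P N z) \<le> real M"
    using E_iff by auto
  then show ?thesis
    by (rule that[OF r(1)])
qed

lemma holomorphic_on_ball_if_pointwise_limit:
  fixes P :: "nat \<Rightarrow> complex \<Rightarrow> complex"
  assumes "open S" "S \<noteq> {}"
    and holo: "\<And>N. P N holomorphic_on S"
    and lim: "\<And>z. z \<in> S \<Longrightarrow> (\<lambda>N. P N z) \<longlonglongrightarrow> F z"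
  obtains x r where "r > 0" "ball x r \<subseteq> S" "F holomorphic_on ball x r"
proof -
  have "\<exists>K. \<forall>N. norm (P N z) \<le> K" if "z \<in> S" for z
    using convergent_imp_Bseq[OF convergentI[OF lim[OF that]]] by (auto simp: Bseq_def)
  with assms(1,2) obtain x r M where r: "r > 0" "ball x r \<subseteq> S"
    and bound: "\<And>N z. z \<in> ball x r \<Longrightarrow> norm (P N z) \<le> M"
    using pointwise_bounded_imp_bounded_on_ball holomorphic_on_imp_continuous_on[OF holo]
    by metis
  obtain \<phi> \<rho> where \<phi>: "\<phi> holomorphic_on ball x r" "strict_mono (\<rho> :: nat \<Rightarrow> nat)"
    "\<And>z. z \<in> ball x r \<Longrightarrow> (\<lambda>n. P (\<rho> n) z) \<longlonglongrightarrow> \<phi> z"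
  proof (rule Montel[of "ball x r" "range P" P])
    show "p holomorphic_on ball x r" if "p \<in> range P" for p
      using that holo r(2) holomorphic_on_subset by blast
    show "\<exists>B. \<forall>p\<in>range P. \<forall>z\<in>K. norm (p z) \<le> B" if "K \<subseteq> ball x r" for K
      using that bound by blast
  qed auto
  have "\<phi> z = F z" if "z \<in> ball x r" for z
  proof (rule LIMSEQ_unique[OF \<phi>(3)[OF that]])
    show "(\<lambda>n. P (\<rho> n) z) \<longlonglongrightarrow> F z"
      using LIMSEQ_subseq_LIMSEQ[OF lim \<phi>(2)] that r(2) by (auto simp: comp_def)
  qed
  then have "F holomorphic_on ball x r"
    using \<phi>(1) holomorphic_transform by blast
  with r show ?thesis
    using that by blast
qed

lemma constant_on_cnj_part_of_pointwise_limit: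
  fixes P :: "nat \<Rightarrow> complex \<Rightarrow> complex"
  assumes "open S" "connected S"
    and "\<And>N. P N holomorphic_on S" "h holomorphic_on S" "g holomorphic_on S"
    and "\<And>z. z \<in> S \<Longrightarrow> (\<lambda>N. P N z) \<longlonglongrightarrow> h z + cnj (g z)"
  shows "g constant_on S"
proof (cases "S = {}")
  case False
  then obtain x r where r: "r > 0" "ball x r \<subseteq> S"
    and F: "(\<lambda>z. h z + cnj (g z)) holomorphic_on ball x r"
    using holomorphic_on_ball_if_pointwise_limit[OF assms(1) _ assms(3,6)] by metis
  have "(\<lambda>z. (h z + cnj (g z)) - h z) holomorphic_on ball x r"
    using holomorphic_on_diff[OF F holomorphic_on_subset[OF assms(4) r(2)]] .
  then have "g constant_on ball x r"
    using constant_on_if_holomorphic_cnj[OF holomorphic_on_subset[OF assms(5) r(2)]] by simp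
  then obtain c where c: "\<And>z. z \<in> ball x r \<Longrightarrow> g z = c"
    unfolding constant_on_def by blast
  have "g z = c" if "z \<in> S" for z
    using analytic_continuation_open[of "ball x r" S g "\<lambda>_. c"] r c assms that by auto
  then show ?thesis
    unfolding constant_on_def by blast
qed (simp add: constant_on_def)

lemma sums_from_sums_of_sum_and_difference:
  fixes a b :: "nat \<Rightarrow> 'a::real_normed_field"
  assumes "(\<lambda>n. a n + b n) sums A" "(\<lambda>n. a n - b n) sums B"
  shows "a sums ((A + B) / 2)" "b sums ((A - B) / 2)"
proof -
  have "(\<lambda>n. ((a n + b n) + (a n - b n)) / 2) sums ((A + B) / 2)"
    "(\<lambda>n. ((a n + b n) - (a n - b n)) / 2) sums ((A - B) / 2)"
    using sums_divide[OF sums_add[OF assms], of 2] sums_divide[OF sums_diff[OF assms], of 2]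
    by simp_all
  then show "a sums ((A + B) / 2)" "b sums ((A - B) / 2)"
    by (simp_all add: field_simps)
qed

lemma closed_convex_comb_in_class:
  assumes "closed_convex_comb C" "\<And>n. in_class (f n) C"
    and "\<And>n. 0 \<le> t n \<and> t n \<le> 1" "t sums 1"
  shows "\<exists>F\<in>C. \<forall>z\<in>unit_disk. (\<lambda>n. complex_of_real (t n) * f n z) sums F z"
proof -
  obtain \<phi> where \<phi>: "\<And>n. \<phi> n \<in> C" "\<And>n z. z \<in> unit_disk \<Longrightarrow> \<phi> n z = f n z"
    using assms(2) unfolding in_class_def by metis
  have "\<exists>F\<in>C. \<forall>z\<in>unit_disk. (\<lambda>n. complex_of_real (t n) * \<phi> n z) sums F z"
    using assms(1,3,4) \<phi>(1) unfolding closed_convex_comb_def by blast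
  then show ?thesis
    using \<phi>(2) by simp
qed

lemma analytic_in_harmonic_analogue:
  assumes "f \<in> G" "f analytic_on unit_disk"
  shows "f \<in> harmonic_analogue G"
proof -
  have "in_class (\<lambda>z. f z + \<epsilon> * 0) G" for \<epsilon> :: complex
    using assms(1) unfolding in_class_def by auto
  with assms(2) show ?thesis
    unfolding harmonic_analogue_def by (intro CollectI exI[of _ f] exI[of _ "\<lambda>_. 0"]) auto
qed

lemma harmonic_analogue_sequenceE:
  assumes "\<forall>n. f n \<in> harmonic_analogue G"
  obtains h g where "\<And>n z. z \<in> unit_disk \<Longrightarrow> f n z = h n z + cnj (g n z)"
    "\<And>n \<epsilon>. norm \<epsilon> = 1 \<Longrightarrow> in_class (\<lambda>z. h n z + \<epsilon> * g n z) G"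
proof -
  have "\<forall>n. \<exists>hg. (\<forall>z\<in>unit_disk. f n z = fst hg z + cnj (snd hg z)) \<and>
      (\<forall>\<epsilon>::complex. norm \<epsilon> = 1 \<longrightarrow> in_class (\<lambda>z. fst hg z + \<epsilon> * snd hg z) G)"
    using assms unfolding harmonic_analogue_def by force
  then obtain hg where hg: "\<forall>n. (\<forall>z\<in>unit_disk. f n z = fst (hg n) z + cnj (snd (hg n) z)) \<and>
      (\<forall>\<epsilon>::complex. norm \<epsilon> = 1 \<longrightarrow> in_class (\<lambda>z. fst (hg n) z + \<epsilon> * snd (hg n) z) G)"
    by (rule choice[THEN exE])
  show ?thesis
    by (rule that[of "\<lambda>n. fst (hg n)" "\<lambda>n. snd (hg n)"]) (use hg in blast)+
qed

lemma closed_convex_comb_of_parts: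
  fixes h g :: "nat \<Rightarrow> complex \<Rightarrow> complex" and t :: "nat \<Rightarrow> real"
  assumes analytic: "\<And>F. F \<in> G \<Longrightarrow> F analytic_on unit_disk" and closed: "closed_convex_comb G"
    and parts: "\<And>n \<epsilon>. norm \<epsilon> = 1 \<Longrightarrow> in_class (\<lambda>z. h n z + \<epsilon> * g n z) G"
    and t: "\<And>n. 0 \<le> t n \<and> t n \<le> 1" "t sums 1"
  obtains H K where "H analytic_on unit_disk" "K analytic_on unit_disk"
    "\<And>z. z \<in> unit_disk \<Longrightarrow> (\<lambda>n. complex_of_real (t n) * h n z) sums H z"
    "\<And>z. z \<in> unit_disk \<Longrightarrow> (\<lambda>n. complex_of_real (t n) * g n z) sums K z"
    "\<And>\<epsilon>. norm \<epsilon> = 1 \<Longrightarrow> in_class (\<lambda>z. H z + \<epsilon> * K z) G"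
proof -
  have sum_in_G: "\<exists>C\<in>G. \<forall>z\<in>unit_disk.
      (\<lambda>n. complex_of_real (t n) * (h n z + \<epsilon> * g n z)) sums C z" if "norm \<epsilon> = 1" for \<epsilon>
    using closed_convex_comb_in_class[OF closed parts[OF that] t] .
  obtain C\<^sub>1 where C\<^sub>1: "C\<^sub>1 \<in> G"
    "\<And>z. z \<in> unit_disk \<Longrightarrow> (\<lambda>n. complex_of_real (t n) * (h n z + g n z)) sums C\<^sub>1 z"
    using sum_in_G[of 1] by auto
  obtain C\<^sub>2 where C\<^sub>2: "C\<^sub>2 \<in> G"
    "\<And>z. z \<in> unit_disk \<Longrightarrow> (\<lambda>n. complex_of_real (t n) * (h n z - g n z)) sums C\<^sub>2 z"
    using sum_in_G[of "-1"] by auto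
  define H where "H z = (C\<^sub>1 z + C\<^sub>2 z) / 2" for z
  define K where "K z = (C\<^sub>1 z - C\<^sub>2 z) / 2" for z
  have sums_H: "(\<lambda>n. complex_of_real (t n) * h n z) sums H z"
    and sums_K: "(\<lambda>n. complex_of_real (t n) * g n z) sums K z" if "z \<in> unit_disk" for z
    using sums_from_sums_of_sum_and_difference[of "\<lambda>n. t n * h n z" "\<lambda>n. t n * g n z"]
      C\<^sub>1(2)[OF that] C\<^sub>2(2)[OF that]
    unfolding H_def K_def by (simp_all add: ring_distribs)
  have analytic_H: "H analytic_on unit_disk" and analytic_K: "K analytic_on unit_disk"
    unfolding H_def K_def using analytic[OF C\<^sub>1(1)] analytic[OF C\<^sub>2(1)]
    by (auto intro!: analytic_intros)
  have in_class_HK: "in_class (\<lambda>z. H z + \<epsilon> * K z) G" if \<epsilon>: "norm \<epsilon> = 1" for \<epsilon>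
  proof -
    obtain C where C: "C \<in> G"
      "\<And>z. z \<in> unit_disk \<Longrightarrow> (\<lambda>n. complex_of_real (t n) * (h n z + \<epsilon> * g n z)) sums C z"
      using sum_in_G[OF \<epsilon>] by blast
    have "(\<lambda>n. complex_of_real (t n) * (h n z + \<epsilon> * g n z)) sums (H z + \<epsilon> * K z)"
      if "z \<in> unit_disk" for z
      using sums_add[OF sums_H[OF that] sums_mult[OF sums_K[OF that], of \<epsilon>]]
      by (simp add: algebra_simps)
    then have "\<forall>z\<in>unit_disk. C z = H z + \<epsilon> * K z"
      using C(2) sums_unique2 by blast
    with C(1) show ?thesis
      unfolding in_class_def by blast
  qed
  show ?thesis
    by (rule that[OF analytic_H analytic_K sums_H sums_K in_class_HK])
qed

lemma closed_convex_comb_harmonic_analogue: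
  assumes analytic: "\<And>F. F \<in> G \<Longrightarrow> F analytic_on unit_disk" and closed: "closed_convex_comb G"
  shows "closed_convex_comb (harmonic_analogue G)"
  unfolding closed_convex_comb_def
proof (intro allI impI)
  fix f :: "nat \<Rightarrow> complex \<Rightarrow> complex" and t :: "nat \<Rightarrow> real"
  assume f: "\<forall>n. f n \<in> harmonic_analogue G" and "\<forall>n. 0 \<le> t n \<and> t n \<le> 1" "t sums 1"
  then have t: "\<And>n. 0 \<le> t n \<and> t n \<le> 1" "t sums 1"
    by blast+
  obtain h g where hg: "\<And>n z. z \<in> unit_disk \<Longrightarrow> f n z = h n z + cnj (g n z)"
    "\<And>n \<epsilon>. norm \<epsilon> = 1 \<Longrightarrow> in_class (\<lambda>z. h n z + \<epsilon> * g n z) G"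
    by (rule harmonic_analogue_sequenceE[OF f]) blast
  obtain H K where HK: "H analytic_on unit_disk" "K analytic_on unit_disk"
    "\<And>z. z \<in> unit_disk \<Longrightarrow> (\<lambda>n. complex_of_real (t n) * h n z) sums H z"
    "\<And>z. z \<in> unit_disk \<Longrightarrow> (\<lambda>n. complex_of_real (t n) * g n z) sums K z"
    "\<And>\<epsilon>. norm \<epsilon> = 1 \<Longrightarrow> in_class (\<lambda>z. H z + \<epsilon> * K z) G"
    by (rule closed_convex_comb_of_parts[of G h g t]) (use analytic closed hg(2) t in auto)
  have "(\<lambda>z. H z + cnj (K z)) \<in> harmonic_analogue G"
    unfolding harmonic_analogue_def
    by (intro CollectI exI[of _ H] exI[of _ K] conjI allI impI ballI HK(1,2,5) refl)
  moreover have "(\<lambda>n. complex_of_real (t n) * f n z) sums (H z + cnj (K z))"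
    if "z \<in> unit_disk" for z
    using sums_add[OF HK(3)[OF that] sums_cnj[THEN iffD2, OF HK(4)[OF that]]]
    by (simp add: hg(1)[OF that] ring_distribs)
  ultimately show "\<exists>F\<in>harmonic_analogue G. \<forall>z\<in>unit_disk.
      (\<lambda>n. complex_of_real (t n) * f n z) sums F z"
    by (intro bexI ballI)
qed

lemma in_class_if_pointwise_limit_of_holomorphic:
  fixes P :: "nat \<Rightarrow> complex \<Rightarrow> complex"
  assumes "G \<subseteq> class_S" "F \<in> harmonic_analogue G"
    and "\<And>N. P N holomorphic_on unit_disk" "\<And>z. z \<in> unit_disk \<Longrightarrow> (\<lambda>N. P N z) \<longlonglongrightarrow> F z"
  shows "in_class F G"
proof -
  obtain h g where hg: "h analytic_on unit_disk" "g analytic_on unit_disk"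
    "\<And>z. z \<in> unit_disk \<Longrightarrow> F z = h z + cnj (g z)"
    "\<And>\<epsilon>. norm \<epsilon> = 1 \<Longrightarrow> in_class (\<lambda>z. h z + \<epsilon> * g z) G"
    using assms(2) unfolding harmonic_analogue_def by blast
  obtain A where A: "A \<in> G" "\<And>z. z \<in> unit_disk \<Longrightarrow> A z = h z + g z"
    using hg(4)[of 1] unfolding in_class_def by auto
  obtain B where B: "B \<in> G" "\<And>z. z \<in> unit_disk \<Longrightarrow> B z = h z - g z"
    using hg(4)[of "-1"] unfolding in_class_def by auto
  have "0 \<in> unit_disk"
    by (simp add: unit_disk_def)
  have "A 0 = 0" "B 0 = 0"
    using A(1) B(1) assms(1) unfolding class_S_def by blast+
  then have "g 0 = 0"
    using A(2)[OF \<open>0 \<in> unit_disk\<close>] B(2)[OF \<open>0 \<in> unit_disk\<close>] by simp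
  moreover have "g constant_on unit_disk"
  proof (rule constant_on_cnj_part_of_pointwise_limit[of unit_disk P h g])
    show "open unit_disk" "connected unit_disk"
      by (simp_all add: unit_disk_def)
    show "h holomorphic_on unit_disk" "g holomorphic_on unit_disk"
      using hg(1,2) by (simp_all add: analytic_imp_holomorphic)
  qed (use assms(3,4) hg(3) in auto)
  ultimately have "g z = 0" if "z \<in> unit_disk" for z
    using \<open>0 \<in> unit_disk\<close> that unfolding constant_on_def by force
  with A show ?thesis
    unfolding in_class_def using hg(3) by auto
qed

lemma closed_convex_comb_if_harmonic_analogue_closed:
  assumes "G \<subseteq> class_S" "closed_convex_comb (harmonic_analogue G)"
  shows "closed_convex_comb G"
  unfolding closed_convex_comb_def
proof (intro allI impI)
  fix f :: "nat \<Rightarrow> complex \<Rightarrow> complex" and t :: "nat \<Rightarrow> real"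
  assume f: "\<forall>n. f n \<in> G" and t: "\<forall>n. 0 \<le> t n \<and> t n \<le> 1" "t sums 1"
  have f_analytic: "f n analytic_on unit_disk" for n
    using f assms(1) unfolding class_S_def by blast
  then have "\<forall>n. f n \<in> harmonic_analogue G"
    using f by (simp add: analytic_in_harmonic_analogue)
  then have "\<exists>F\<in>harmonic_analogue G. \<forall>z\<in>unit_disk.
      (\<lambda>n. complex_of_real (t n) * f n z) sums F z"
    using assms(2)[unfolded closed_convex_comb_def, rule_format, of f t] t by blast
  then obtain F where F: "F \<in> harmonic_analogue G"
    "\<And>z. z \<in> unit_disk \<Longrightarrow> (\<lambda>n. complex_of_real (t n) * f n z) sums F z"
    by blast
  have "in_class F G"
  proof (rule in_class_if_pointwise_limit_of_holomorphic[OF assms(1) F(1)])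
    show "(\<lambda>z. \<Sum>n<N. complex_of_real (t n) * f n z) holomorphic_on unit_disk" for N
      using analytic_imp_holomorphic[OF f_analytic] by (intro holomorphic_intros)
    show "(\<lambda>N. \<Sum>n<N. complex_of_real (t n) * f n z) \<longlonglongrightarrow> F z" if "z \<in> unit_disk" for z
      using F(2)[OF that] unfolding sums_def .
  qed
  then obtain F' where "F' \<in> G" "\<forall>z\<in>unit_disk. F' z = F z"
    unfolding in_class_def by blast
  then show "\<exists>F\<in>G. \<forall>z\<in>unit_disk. (\<lambda>n. complex_of_real (t n) * f n z) sums F z"
    using F(2) by (intro bexI[of _ F']) simp_all
qed

theorem theorem2p12:
  fixes G :: "(complex \<Rightarrow> complex) set"
  assumes "G \<subseteq> class_S"
  shows "closed_convex_comb G \<longleftrightarrow> closed_convex_comb (harmonic_analogue G)"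
proof
  show "closed_convex_comb G \<Longrightarrow> closed_convex_comb (harmonic_analogue G)"
    using assms by (intro closed_convex_comb_harmonic_analogue) (auto simp: class_S_def)
  show "closed_convex_comb (harmonic_analogue G) \<Longrightarrow> closed_convex_comb G"
    using assms by (rule closed_convex_comb_if_harmonic_analogue_closed)
qed

end
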